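(* Let $I\subset\mathbb R$ be an open interval, $f_l,f_r:I\to\mathbb R$ continuously differentiable, $u_l,u_r\in\mathbb R$, and $f:=f_l+f_r+u_r-u_l$. Suppose $p^*\in I$ satisfies $f(p^* )=0$ and $f'(p^* )\ne0$, and set $u^*:=\frac12\big(u_l+u_r+f_r(p^* )-f_l(p^* )\big)$. Let $\eta\in(0,1)$. Then there exists $\epsilon>0$ such that the following holds. Let real sequences $(p_n),(F_{n,l}),(F_{n,r}),(F'_{n,l}),(F'_{n,r})$ be given, and set $F_n:=F_{n,l}+F_{n,r}+u_r-u_l$, $F'_n:=F'_{n,l}+F'_{n,r}$, with $F'_n\ne0$ and $$p_{n+1}=p_n-\frac{F_n}{F'_n},\qquad u_n=\tfrac12\big(u_l+u_r+F_{n,r}-F_{n,l}\big).$$ Assume $|p_0-p^*|\le\epsilon$, the sequence $(F'_n)$ is bounded, and for every $n$ with $p_n\in I$ and each $k\in\{l,r\}$, $$|F_{n,k}-f_k(p_n)|\le\tfrac16\eta|F_n|,\qquad |F'_{n,k}-f_k'(p_n)|\le\tfrac16\eta|F'_n|.$$ Then $p_n\to p^*$ and $u_n\to u^*$. *)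

theory Defs
  imports "HOL-Analysis.Analysis"
begin

end

theory Submission
  imports Defs
begin

(* Write g = fl + fr + ur - ul. Near the simple root pstar the mean value theorem gives
   g (p n) = m * (p n - pstar) with a slope m close to g' pstar, while the hypotheses make the
   computed residual and derivative agree with g (p n) and g' (p n) up to the relative error
   eta/3. One inexact Newton step then shrinks p n - pstar by a factor close to
   2 (eta/3) / (1 - eta/3) < 1, so p n converges geometrically. Each computed component differs
   from fl (p n), resp. fr (p n), by at most |g (p n)|, which tends to 0; hence u n converges too. *)

(* a bounds the relative errors of residual and derivative, k the relative deviation of the
   slopes from g' pstar; at k = 0 the factor is 2a/(1-a), which is below 1 exactly when a < 1/3. *)
definition newton_contraction :: "real \<Rightarrow> real \<Rightarrow> real" where
  "newton_contraction a k = a + (2*k + a/(1-a)*(1+k)) * (1+a)/(1-k)"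

lemma newton_contraction_nonneg:
  "0 \<le> a \<Longrightarrow> a < 1 \<Longrightarrow> 0 \<le> k \<Longrightarrow> k < 1 \<Longrightarrow> 0 \<le> newton_contraction a k"
  unfolding newton_contraction_def by simp

lemma newton_contraction_lt_one:
  assumes "0 \<le> a" "a < 1/3"
  obtains k where "0 < k" "k < 1" "newton_contraction a k < 1"
proof -
  have "newton_contraction a 0 = 2*a/(1-a)"
    using assms by (simp add: newton_contraction_def field_simps)
  also have "\<dots> < 1" using assms by (simp add: field_simps)
  finally have "newton_contraction a 0 < 1" .
  moreover have "isCont (newton_contraction a) 0"
    unfolding newton_contraction_def using assms by (intro continuous_intros) auto
  ultimately have "\<forall>\<^sub>F k in at_right 0. newton_contraction a k < 1"
    by (metis isCont_def filterlim_at_split order_tendstoD(2))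
  moreover have "\<forall>\<^sub>F k in at_right 0. 0 < k \<and> k < (1::real)"
    using eventually_at_right_real[of 0 1] by simp
  ultimately have "\<exists>k. newton_contraction a k < 1 \<and> 0 < k \<and> k < 1"
    using eventually_happens'[OF trivial_limit_at_right_real] eventually_conj by blast
  thus ?thesis using that by blast
qed

lemma inexact_newton_quotient_error:
  fixes e F F' m s d a k :: real
  assumes res: "\<bar>F - m*e\<bar> \<le> a*\<bar>F\<bar>" and der: "\<bar>F' - s\<bar> \<le> a*\<bar>F'\<bar>"
    and m: "\<bar>m - d\<bar> \<le> k*\<bar>d\<bar>" and s: "\<bar>s - d\<bar> \<le> k*\<bar>d\<bar>"
    and "F' \<noteq> 0" and a: "0 \<le> a" "a < 1" and k: "0 \<le> k" "k < 1"
  shows "\<bar>e - F/F'\<bar> \<le> newton_contraction a k * \<bar>e\<bar>"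
proof -
  have "\<bar>F - m*e\<bar> \<le> a*(\<bar>m*e\<bar> + \<bar>F - m*e\<bar>)"
    using res a by (smt (verit) mult_left_mono)
  hence "(1-a)*\<bar>F - m*e\<bar> \<le> a*\<bar>m*e\<bar>" by (simp add: algebra_simps)
  also have "\<dots> \<le> a*((1+k)*\<bar>d\<bar>*\<bar>e\<bar>)"
  proof -
    have "\<bar>m\<bar> \<le> (1+k)*\<bar>d\<bar>" using m by (simp add: algebra_simps)
    hence "\<bar>m*e\<bar> \<le> (1+k)*\<bar>d\<bar>*\<bar>e\<bar>" by (simp add: abs_mult mult_right_mono)
    thus ?thesis using a by (intro mult_left_mono) auto
  qed
  finally have res_bound: "\<bar>F - m*e\<bar> \<le> a/(1-a)*(1+k)*\<bar>d\<bar>*\<bar>e\<bar>"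
    using a by (simp add: field_simps)
  have "(1-k)*\<bar>d\<bar> \<le> \<bar>s\<bar>" using s by (simp add: algebra_simps)
  also have "\<dots> \<le> (1+a)*\<bar>F'\<bar>" using der by (simp add: algebra_simps)
  finally have d_bound: "\<bar>d\<bar> \<le> (1+a)/(1-k)*\<bar>F'\<bar>" using k by (simp add: field_simps)
  have "\<bar>s - m\<bar> \<le> 2*k*\<bar>d\<bar>" using m s by linarith
  have "(e - F/F')*F' = e*(F' - s) + e*(s - m) + (m*e - F)"
    using \<open>F' \<noteq> 0\<close> by (simp add: field_simps)
  hence "\<bar>e - F/F'\<bar>*\<bar>F'\<bar> \<le> \<bar>e*(F' - s)\<bar> + \<bar>e*(s - m)\<bar> + \<bar>m*e - F\<bar>"
    by (simp only: abs_mult[symmetric])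
  hence "\<bar>e - F/F'\<bar>*\<bar>F'\<bar> \<le> \<bar>e\<bar>*\<bar>F' - s\<bar> + \<bar>e\<bar>*\<bar>s - m\<bar> + \<bar>F - m*e\<bar>"
    by (simp add: abs_mult abs_minus_commute)
  also have "\<dots> \<le> \<bar>e\<bar>*(a*\<bar>F'\<bar>) + \<bar>e\<bar>*(2*k*\<bar>d\<bar>) + a/(1-a)*(1+k)*\<bar>d\<bar>*\<bar>e\<bar>"
    using der \<open>\<bar>s - m\<bar> \<le> 2*k*\<bar>d\<bar>\<close> res_bound by (intro add_mono mult_left_mono) auto
  also have "\<dots> = a*\<bar>e\<bar>*\<bar>F'\<bar> + (2*k + a/(1-a)*(1+k))*\<bar>e\<bar>*\<bar>d\<bar>"
    by (simp add: algebra_simps)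
  also have "\<dots> \<le> a*\<bar>e\<bar>*\<bar>F'\<bar> + (2*k + a/(1-a)*(1+k))*\<bar>e\<bar>*((1+a)/(1-k)*\<bar>F'\<bar>)"
    using d_bound a k by (intro add_left_mono mult_left_mono) auto
  also have "\<dots> = newton_contraction a k * \<bar>e\<bar> * \<bar>F'\<bar>"
    using a k by (simp add: newton_contraction_def field_simps)
  finally show ?thesis using \<open>F' \<noteq> 0\<close> by simp
qed

lemma MVT_slope_with_property:
  fixes g g' :: "real \<Rightarrow> real"
  assumes "a \<le> b"
    and deriv: "\<And>y. a \<le> y \<Longrightarrow> y \<le> b \<Longrightarrow> (g has_real_derivative g' y) (at y)"
    and P: "\<And>y. a \<le> y \<Longrightarrow> y \<le> b \<Longrightarrow> P (g' y)"
  shows "\<exists>m. g b - g a = m * (b - a) \<and> P m"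
proof (cases "a = b")
  case True
  thus ?thesis using P[of a] by auto
next
  case False
  with \<open>a \<le> b\<close> obtain z where "a < z" "z < b" "g b - g a = (b - a) * g' z"
    using MVT2[of a b g g'] deriv by force
  thus ?thesis using P[of z] by (auto simp: mult.commute)
qed

lemma inexact_newton_step_contracts:
  fixes g g' :: "real \<Rightarrow> real"
  assumes deriv: "\<And>y. \<bar>y - c\<bar> \<le> \<delta> \<Longrightarrow> (g has_real_derivative g' y) (at y)"
    and slope: "\<And>y. \<bar>y - c\<bar> \<le> \<delta> \<Longrightarrow> \<bar>g' y - g' c\<bar> \<le> k * \<bar>g' c\<bar>"
    and root: "g c = 0" and x: "\<bar>x - c\<bar> \<le> \<delta>"
    and res: "\<bar>F - g x\<bar> \<le> a * \<bar>F\<bar>" and der: "\<bar>F' - g' x\<bar> \<le> a * \<bar>F'\<bar>" and "F' \<noteq> 0"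
    and a: "0 \<le> a" "a < 1" and k: "0 \<le> k" "k < 1"
  shows "\<bar>x - F/F' - c\<bar> \<le> newton_contraction a k * \<bar>x - c\<bar>"
proof -
  have "\<exists>m. g x - g c = m * (x - c) \<and> \<bar>m - g' c\<bar> \<le> k * \<bar>g' c\<bar>"
  proof (cases "c \<le> x")
    case True
    thus ?thesis using x by (intro MVT_slope_with_property[of c x g g'] deriv slope) auto
  next
    case False
    hence "\<exists>m. g c - g x = m * (c - x) \<and> \<bar>m - g' c\<bar> \<le> k * \<bar>g' c\<bar>"
      using x by (intro MVT_slope_with_property[of x c g g'] deriv slope) auto
    thus ?thesis by (metis minus_diff_eq mult_minus_right)
  qed
  then obtain m where "F - g x = F - m * (x - c)" "\<bar>m - g' c\<bar> \<le> k * \<bar>g' c\<bar>"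
    using root by auto
  with res have "\<bar>(x - c) - F/F'\<bar> \<le> newton_contraction a k * \<bar>x - c\<bar>"
    by (intro inexact_newton_quotient_error[OF _ der _ slope]) (use x \<open>F' \<noteq> 0\<close> a k in auto)
  thus ?thesis by (simp add: algebra_simps)
qed

lemma open_neighbourhood_continuous_bound:
  fixes h :: "real \<Rightarrow> real"
  assumes "open I" "continuous_on I h" "c \<in> I" "0 < r"
  obtains \<delta> where "0 < \<delta>" "\<And>x. \<bar>x - c\<bar> \<le> \<delta> \<Longrightarrow> x \<in> I \<and> \<bar>h x - h c\<bar> \<le> r"
proof -
  obtain \<delta>\<^sub>1 where "0 < \<delta>\<^sub>1" "ball c \<delta>\<^sub>1 \<subseteq> I"
    using openE[OF assms(1,3)] .
  moreover obtain \<delta>\<^sub>2 where "0 < \<delta>\<^sub>2" "\<forall>x\<in>I. dist x c < \<delta>\<^sub>2 \<longrightarrow> dist (h x) (h c) < r"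
    using continuous_on_iff[THEN iffD1, OF assms(2), rule_format, OF assms(3,4)] by blast
  ultimately have "x \<in> I \<and> \<bar>h x - h c\<bar> \<le> r" if "\<bar>x - c\<bar> \<le> min \<delta>\<^sub>1 \<delta>\<^sub>2 / 2" for x
  proof -
    have "dist x c < \<delta>\<^sub>1" "dist x c < \<delta>\<^sub>2"
      using that \<open>0 < \<delta>\<^sub>1\<close> \<open>0 < \<delta>\<^sub>2\<close> by (auto simp: dist_real_def)
    moreover from this(1) have "x \<in> I"
      using \<open>ball c \<delta>\<^sub>1 \<subseteq> I\<close> by (auto simp: dist_commute)
    ultimately show ?thesis
      using \<open>\<forall>x\<in>I. dist x c < \<delta>\<^sub>2 \<longrightarrow> dist (h x) (h c) < r\<close> by (auto simp: dist_real_def)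
  qed
  thus ?thesis using \<open>0 < \<delta>\<^sub>1\<close> \<open>0 < \<delta>\<^sub>2\<close> by (intro that[of "min \<delta>\<^sub>1 \<delta>\<^sub>2 / 2"]) auto
qed

lemma contracting_sequence_converges:
  fixes p :: "nat \<Rightarrow> real"
  assumes "0 \<le> \<theta>" "\<theta> < 1" and start: "\<bar>p 0 - c\<bar> \<le> \<delta>"
    and contract: "\<And>n. \<bar>p n - c\<bar> \<le> \<delta> \<Longrightarrow> \<bar>p (Suc n) - c\<bar> \<le> \<theta> * \<bar>p n - c\<bar>"
  shows "\<bar>p n - c\<bar> \<le> \<delta>" and "p \<longlonglongrightarrow> c"
proof -
  have geometric: "\<bar>p n - c\<bar> \<le> \<theta>^n * \<bar>p 0 - c\<bar> \<and> \<bar>p n - c\<bar> \<le> \<delta>" for n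
  proof (induction n)
    case (Suc n)
    hence "\<bar>p (Suc n) - c\<bar> \<le> \<theta> * (\<theta>^n * \<bar>p 0 - c\<bar>)"
      using contract[of n] \<open>0 \<le> \<theta>\<close> by (meson mult_left_mono order_trans)
    moreover have "\<theta>^Suc n * \<bar>p 0 - c\<bar> \<le> \<bar>p 0 - c\<bar>"
      using assms(1,2) by (intro mult_left_le_one_le power_le_one) auto
    ultimately show ?case using start by simp
  qed (use start in simp)
  thus "\<bar>p n - c\<bar> \<le> \<delta>" by blast
  have "(\<lambda>n. \<theta>^n * \<bar>p 0 - c\<bar>) \<longlonglongrightarrow> 0"
    using assms(1,2) by (intro tendsto_mult_left_zero LIMSEQ_power_zero) simp
  hence "(\<lambda>n. p n - c) \<longlonglongrightarrow> 0"
    by (rule Lim_null_comparison[rotated]) (use geometric in simp)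
  thus "p \<longlonglongrightarrow> c" by (simp add: LIM_zero_iff)
qed

lemma split_error_le_residual:
  fixes A B F G t :: real
  assumes "\<bar>A\<bar> \<le> t * \<bar>F\<bar>" "\<bar>B\<bar> \<le> t * \<bar>F\<bar>" "F = G + A + B" "t \<le> 1/3"
  shows "\<bar>A\<bar> \<le> \<bar>G\<bar>"
proof -
  have "t * \<bar>F\<bar> \<le> 1/3 * \<bar>F\<bar>" using assms(4) by (rule mult_right_mono) simp
  thus ?thesis using assms(1-3) abs_triangle_ineq[of "G + A" B] abs_triangle_ineq[of G A] by linarith
qed

lemma split_approximation_tendsto:
  fixes a b :: "real \<Rightarrow> real" and A B p :: "nat \<Rightarrow> real"
  assumes p: "p \<longlonglongrightarrow> c" and "isCont a c" "isCont b c" and root: "a c + b c + s = 0"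
    and "t \<le> 1/3"
    and "\<And>n. \<bar>A n - a (p n)\<bar> \<le> t * \<bar>A n + B n + s\<bar>"
    and "\<And>n. \<bar>B n - b (p n)\<bar> \<le> t * \<bar>A n + B n + s\<bar>"
  shows "A \<longlonglongrightarrow> a c"
proof -
  have a_lim: "(\<lambda>n. a (p n)) \<longlonglongrightarrow> a c" and b_lim: "(\<lambda>n. b (p n)) \<longlonglongrightarrow> b c"
    using p assms(2,3) by (auto intro: isCont_tendsto_compose)
  have residual_lim: "(\<lambda>n. \<bar>a (p n) + b (p n) + s\<bar>) \<longlonglongrightarrow> 0"
    using tendsto_rabs[OF tendsto_add[OF tendsto_add[OF a_lim b_lim] tendsto_const[of s]]] root by simp
  have error_le_residual: "\<bar>A n - a (p n)\<bar> \<le> \<bar>a (p n) + b (p n) + s\<bar>" for n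
    using assms(6,7)[of n] assms(5) by (intro split_error_le_residual[where B = "B n - b (p n)" and F = "A n + B n + s"]) simp_all
  have "(\<lambda>n. A n - a (p n)) \<longlonglongrightarrow> 0"
    by (rule Lim_null_comparison[OF always_eventually residual_lim]) (simp add: error_le_residual)
  from tendsto_add[OF this a_lim] show ?thesis by simp
qed

theorem theorem2:
  fixes I :: "real set"
    and fl fr fl' fr' :: "real \<Rightarrow> real"
    and ul ur pstar eta :: real
  assumes I_open: "open I" and I_interval: "is_interval I"
    and fl_deriv: "\<And>x. x \<in> I \<Longrightarrow> (fl has_real_derivative fl' x) (at x)"
    and fr_deriv: "\<And>x. x \<in> I \<Longrightarrow> (fr has_real_derivative fr' x) (at x)"
    and fl'_cont: "continuous_on I fl'"
    and fr'_cont: "continuous_on I fr'"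
    and pstar_in: "pstar \<in> I"
    and f_zero: "fl pstar + fr pstar + ur - ul = 0"
    and f'_nonzero: "fl' pstar + fr' pstar \<noteq> 0"
    and eta: "0 < eta" "eta < 1"
  shows "\<exists>\<epsilon>>0. \<forall>(p :: nat \<Rightarrow> real) (Fl :: nat \<Rightarrow> real) Fr Fl' Fr'.
           (\<forall>n. Fl' n + Fr' n \<noteq> 0) \<longrightarrow>
           (\<forall>n. p (Suc n) = p n - (Fl n + Fr n + ur - ul) / (Fl' n + Fr' n)) \<longrightarrow>
           \<bar>p 0 - pstar\<bar> \<le> \<epsilon> \<longrightarrow>
           Bseq (\<lambda>n. Fl' n + Fr' n) \<longrightarrow>
           (\<forall>n. p n \<in> I \<longrightarrow>
              \<bar>Fl n - fl (p n)\<bar> \<le> eta / 6 * \<bar>Fl n + Fr n + ur - ul\<bar> \<and>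
              \<bar>Fr n - fr (p n)\<bar> \<le> eta / 6 * \<bar>Fl n + Fr n + ur - ul\<bar> \<and>
              \<bar>Fl' n - fl' (p n)\<bar> \<le> eta / 6 * \<bar>Fl' n + Fr' n\<bar> \<and>
              \<bar>Fr' n - fr' (p n)\<bar> \<le> eta / 6 * \<bar>Fl' n + Fr' n\<bar>) \<longrightarrow>
           p \<longlonglongrightarrow> pstar \<and>
           (\<lambda>n. (ul + ur + Fr n - Fl n) / 2) \<longlonglongrightarrow> (ul + ur + fr pstar - fl pstar) / 2"
proof -
  let ?g = "\<lambda>x. fl x + fr x + ur - ul" and ?g' = "\<lambda>x. fl' x + fr' x"
  define a where "a = eta / 3"
  have a: "0 \<le> a" "a < 1/3" using eta by (simp_all add: a_def)
  then obtain k where k: "0 < k" "k < 1" and \<theta>: "newton_contraction a k < 1"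
    by (rule newton_contraction_lt_one)
  have "0 < k * \<bar>?g' pstar\<bar>" using k f'_nonzero by simp
  then obtain \<delta> where "0 < \<delta>" and near: "\<And>x. \<bar>x - pstar\<bar> \<le> \<delta> \<Longrightarrow>
      x \<in> I \<and> \<bar>?g' x - ?g' pstar\<bar> \<le> k * \<bar>?g' pstar\<bar>"
    using open_neighbourhood_continuous_bound[OF I_open continuous_on_add[OF fl'_cont fr'_cont] pstar_in]
    by blast
  have g_deriv: "(?g has_real_derivative ?g' x) (at x)" if "x \<in> I" for x
    using fl_deriv[OF that] fr_deriv[OF that] by (auto intro!: derivative_eq_intros)
  show ?thesis
  proof (rule exI[of _ \<delta>], intro conjI[OF \<open>0 < \<delta>\<close>] allI impI)
    fix p Fl Fr Fl' Fr' :: "nat \<Rightarrow> real"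
    assume nz: "\<forall>n. Fl' n + Fr' n \<noteq> 0"
      and newton: "\<forall>n. p (Suc n) = p n - (Fl n + Fr n + ur - ul) / (Fl' n + Fr' n)"
      and start: "\<bar>p 0 - pstar\<bar> \<le> \<delta>"
      and errors: "\<forall>n. p n \<in> I \<longrightarrow>
              \<bar>Fl n - fl (p n)\<bar> \<le> eta / 6 * \<bar>Fl n + Fr n + ur - ul\<bar> \<and>
              \<bar>Fr n - fr (p n)\<bar> \<le> eta / 6 * \<bar>Fl n + Fr n + ur - ul\<bar> \<and>
              \<bar>Fl' n - fl' (p n)\<bar> \<le> eta / 6 * \<bar>Fl' n + Fr' n\<bar> \<and>
              \<bar>Fr' n - fr' (p n)\<bar> \<le> eta / 6 * \<bar>Fl' n + Fr' n\<bar>"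
    have contract: "\<bar>p (Suc n) - pstar\<bar> \<le> newton_contraction a k * \<bar>p n - pstar\<bar>"
      if "\<bar>p n - pstar\<bar> \<le> \<delta>" for n
    proof -
      let ?F = "Fl n + Fr n + ur - ul" and ?F' = "Fl' n + Fr' n"
      have "\<bar>?F - ?g (p n)\<bar> \<le> a * \<bar>?F\<bar>" "\<bar>?F' - ?g' (p n)\<bar> \<le> a * \<bar>?F'\<bar>"
        using errors near[OF that] abs_triangle_ineq[of "Fl n - fl (p n)" "Fr n - fr (p n)"]
          abs_triangle_ineq[of "Fl' n - fl' (p n)" "Fr' n - fr' (p n)"]
        unfolding a_def by (auto simp: algebra_simps)
      with that have "\<bar>p n - ?F / ?F' - pstar\<bar> \<le> newton_contraction a k * \<bar>p n - pstar\<bar>"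
        using near g_deriv f_zero nz a k by (intro inexact_newton_step_contracts[where g = ?g]) auto
      thus ?thesis using newton by simp
    qed
    have "0 \<le> newton_contraction a k" using a k by (intro newton_contraction_nonneg) auto
    note convergence = contracting_sequence_converges[OF this \<theta> start contract]
    have "p n \<in> I" for n using near convergence(1) by blast
    then have "\<bar>Fl n - fl (p n)\<bar> \<le> eta/6 * \<bar>Fl n + Fr n + (ur - ul)\<bar>"
      "\<bar>Fr n - fr (p n)\<bar> \<le> eta/6 * \<bar>Fl n + Fr n + (ur - ul)\<bar>" for n
      using errors by (simp_all add: add_diff_eq)
    moreover have "isCont fl pstar" "isCont fr pstar"
      using fl_deriv[OF pstar_in] fr_deriv[OF pstar_in] by (auto intro: DERIV_isCont)
    ultimately have "Fl \<longlonglongrightarrow> fl pstar" "Fr \<longlonglongrightarrow> fr pstar"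
      using split_approximation_tendsto[OF convergence(2), of fl fr "ur - ul" "eta/6" Fl Fr]
        split_approximation_tendsto[OF convergence(2), of fr fl "ur - ul" "eta/6" Fr Fl]
        f_zero eta by (simp_all add: ac_simps add_diff_eq)
    thus "p \<longlonglongrightarrow> pstar \<and> (\<lambda>n. (ul + ur + Fr n - Fl n) / 2) \<longlonglongrightarrow> (ul + ur + fr pstar - fl pstar) / 2"
      using convergence(2) by (auto intro!: tendsto_intros)
  qed
qed

end
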